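(* For $k\ge0$ let $\mathcal R^{(N,k)}(x)=\mathcal R^{(N+k-1)}(x)\cdots\mathcal R^{(N)}(x)$ (with $\mathcal R^{(N,0)}=\mathrm{Id}$) and $D_k^{(N)}(x)=\mathcal R^{(N,k)}(x)^{-1}\mathcal D^{(N+k)}(x)\mathcal R^{(N,k)}(x)$, so that $W_1^{(N+k)}(x.E)={\rm Tr}\,D_k^{(N)}(x)M^{(N)}(x.E)$. Then there exist polynomials $\alpha_k^{(N)}(x)\in\mathbb C[x]$, $k=0,\dots,\dim\mathfrak g$, not all zero and independent of $E$, such that $\sum_k\alpha_k^{(N)}D_k^{(N)}=0$ and for every $E\in\mathfrak g$ $$\sum_{k=0}^{\dim\mathfrak g}\alpha_k^{(N)}(x)W_1^{(N+k)}(x.E)=0 .$$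
   Context: Let $G\subset GL(r,\mathbb C)$ be a complex reductive Lie group given in a faithful matrix representation, with Lie algebra $\mathfrak g\subset\mathfrak{gl}(r,\mathbb C)$; ${\rm Tr}$ is the matrix trace. For each integer $N$ let $\mathcal D^{(N)}(x)\in\mathfrak g$ be rational in $x$, let $\Psi^{(N)}(x)$ be an invertible $G$-valued solution of $\frac{d}{dx}\Psi^{(N)}=\mathcal D^{(N)}\Psi^{(N)}$ (on a common simply connected domain avoiding all poles), and assume $\Psi^{(N+1)}(x)=\mathcal R^{(N)}(x)\Psi^{(N)}(x)$ with $\mathcal R^{(N)}(x)$ an invertible matrix, rational in $x$, with rational inverse. For $E\in\mathfrak g$, $M^{(N)}(x.E)=\Psi^{(N)}(x)E\Psi^{(N)}(x)^{-1}$ and $W_1^{(N)}(x.E)={\rm Tr}\,\mathcal D^{(N)}(x)M^{(N)}(x.E)$. *)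

theory Defs
  imports "HOL-Analysis.Analysis" "HOL-Computational_Algebra.Polynomial"
begin

text \<open>Complex r x r matrices are modelled as complex^'n^'n with r = CARD('n).\<close>

definition mscale :: "complex \<Rightarrow> complex^'n^'n \<Rightarrow> complex^'n^'n" where
  "mscale c A = (\<chi> i j. c * A$i$j)"

definition cdim :: "(complex^'n^'n) set \<Rightarrow> nat" where
  "cdim V = vector_space.dim mscale V"

definition csubspace_vec :: "(complex^'n) set \<Rightarrow> bool" where
  "csubspace_vec S \<longleftrightarrow> 0 \<in> S \<and> (\<forall>u\<in>S. \<forall>v\<in>S. u + v \<in> S) \<and> (\<forall>c u. u \<in> S \<longrightarrow> c *s u \<in> S)"

definition matrix_group :: "(complex^'n^'n) set \<Rightarrow> bool" where
  "matrix_group G \<longleftrightarrow> G \<subseteq> {A. invertible A} \<and> mat 1 \<in> G \<and>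
     (\<forall>A\<in>G. \<forall>B\<in>G. A ** B \<in> G) \<and> (\<forall>A\<in>G. matrix_inv A \<in> G)"

text \<open>Lie group given as a (relatively) closed subgroup of GL(r,C).\<close>
definition closed_matrix_group :: "(complex^'n^'n) set \<Rightarrow> bool" where
  "closed_matrix_group G \<longleftrightarrow> matrix_group G \<and>
     (\<forall>A. invertible A \<and> A \<in> closure G \<longrightarrow> A \<in> G)"

definition lie_algebra :: "(complex^'n^'n) set \<Rightarrow> (complex^'n^'n) set" where
  "lie_algebra G = {E. \<exists>\<gamma>::real \<Rightarrow> complex^'n^'n. (\<forall>t. \<gamma> t \<in> G) \<and> \<gamma> 0 = mat 1 \<and>
       (\<gamma> has_vector_derivative E) (at 0)}"

text \<open>Complex reductive matrix group: closed subgroup of GL(r,C) with complex Lie algebra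
  whose defining (faithful) representation on C^r is completely reducible.\<close>
definition complex_reductive_matrix_group :: "(complex^'n^'n) set \<Rightarrow> bool" where
  "complex_reductive_matrix_group G \<longleftrightarrow> closed_matrix_group G \<and>
     (\<forall>c. \<forall>E\<in>lie_algebra G. mscale c E \<in> lie_algebra G) \<and>
     (\<forall>S. csubspace_vec S \<and> (\<forall>g\<in>G. \<forall>v\<in>S. g *v v \<in> S) \<longrightarrow>
        (\<exists>T. csubspace_vec T \<and> (\<forall>g\<in>G. \<forall>v\<in>T. g *v v \<in> T) \<and> S \<inter> T = {0} \<and>
             (\<forall>w. \<exists>u\<in>S. \<exists>v\<in>T. w = u + v)))"

definition rational_on :: "complex set \<Rightarrow> (complex \<Rightarrow> complex) \<Rightarrow> bool" where
  "rational_on U f \<longleftrightarrow> (\<exists>p q :: complex poly. \<forall>x\<in>U. poly q x \<noteq> 0 \<and> f x = poly p x / poly q x)"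

definition rational_mat_on :: "complex set \<Rightarrow> (complex \<Rightarrow> complex^'n^'n) \<Rightarrow> bool" where
  "rational_mat_on U F \<longleftrightarrow> (\<forall>i j. rational_on U (\<lambda>x. F x $ i $ j))"

definition Mfun :: "(int \<Rightarrow> complex \<Rightarrow> complex^'n^'n) \<Rightarrow> int \<Rightarrow> complex \<Rightarrow> complex^'n^'n \<Rightarrow> complex^'n^'n" where
  "Mfun \<Psi> N x E = \<Psi> N x ** E ** matrix_inv (\<Psi> N x)"

definition W1 :: "(int \<Rightarrow> complex \<Rightarrow> complex^'n^'n) \<Rightarrow> (int \<Rightarrow> complex \<Rightarrow> complex^'n^'n) \<Rightarrow>
    int \<Rightarrow> complex \<Rightarrow> complex^'n^'n \<Rightarrow> complex" where
  "W1 D \<Psi> N x E = trace (D N x ** Mfun \<Psi> N x E)"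

fun Rprod :: "(int \<Rightarrow> complex \<Rightarrow> complex^'n^'n) \<Rightarrow> int \<Rightarrow> nat \<Rightarrow> complex \<Rightarrow> complex^'n^'n" where
  "Rprod R N 0 x = mat 1"
| "Rprod R N (Suc k) x = R (N + int k) x ** Rprod R N k x"

definition Dk :: "(int \<Rightarrow> complex \<Rightarrow> complex^'n^'n) \<Rightarrow> (int \<Rightarrow> complex \<Rightarrow> complex^'n^'n) \<Rightarrow>
    int \<Rightarrow> nat \<Rightarrow> complex \<Rightarrow> complex^'n^'n" where
  "Dk R D N k x = matrix_inv (Rprod R N k x) ** D (N + int k) x ** Rprod R N k x"

end

theory Submission
  imports Defs
begin

text \<open>Since \<open>\<Psi>(N+k) = R(N,k) \<Psi>(N)\<close>, the matrix \<open>R(N,k) = \<Psi>(N+k) \<Psi>(N)\<^sup>-\<^sup>1\<close> lies in \<open>G\<close>,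
  so \<open>D\<^sub>k(x)\<close> is a conjugate of \<open>D(N+k)(x)\<close> by an element of \<open>G\<close> and lies in the Lie algebra.
  At the same time \<open>D\<^sub>k\<close> is rational in \<open>x\<close>, since only \<open>R\<close> and \<open>R\<^sup>-\<^sup>1\<close> enter, never \<open>\<Psi>\<close>.
  Thus \<open>dim + 1\<close> rational matrix functions take their values in a space of dimension \<open>dim\<close>
  at infinitely many points; after clearing denominators, fraction-free Gaussian elimination
  over \<open>\<complex>[x]\<close> yields a polynomial relation among them. Pairing it with \<open>M(N)(x.E)\<close> under the
  trace gives the relation among the \<open>W\<^sub>1(N+k)\<close>, because \<open>W\<^sub>1(N+k)(x.E) = Tr D\<^sub>k(x) M(N)(x.E)\<close>.\<close>

lemma matrix_inv_right:
  fixes A :: "'a::semiring_1^'n^'n"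
  assumes "invertible A"
  shows "A ** matrix_inv A = mat 1"
  using someI_ex[OF assms[unfolded invertible_def]] unfolding matrix_inv_def by auto

lemma matrix_inv_left:
  fixes A :: "'a::semiring_1^'n^'n"
  assumes "invertible A"
  shows "matrix_inv A ** A = mat 1"
  using someI_ex[OF assms[unfolded invertible_def]] unfolding matrix_inv_def by auto

lemma matrix_inv_unique:
  fixes A B :: "'a::semiring_1^'n^'n"
  assumes "A ** B = mat 1" "B ** A = mat 1"
  shows "matrix_inv A = B"
proof -
  have "invertible A" using assms unfolding invertible_def by blast
  then have "matrix_inv A = B ** (A ** matrix_inv A)"
    by (simp add: matrix_mul_assoc assms(2))
  then show ?thesis using matrix_inv_right[OF \<open>invertible A\<close>] by simp
qed

lemma matrix_inv_mult:
  fixes A B :: "'a::semiring_1^'n^'n"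
  assumes "invertible A" "invertible B"
  shows "matrix_inv (A ** B) = matrix_inv B ** matrix_inv A"
proof (rule matrix_inv_unique)
  have "A ** B ** (matrix_inv B ** matrix_inv A) = A ** (B ** matrix_inv B) ** matrix_inv A"
    by (simp add: matrix_mul_assoc)
  then show "A ** B ** (matrix_inv B ** matrix_inv A) = mat 1"
    using assms by (simp add: matrix_inv_right)
  have "matrix_inv B ** matrix_inv A ** (A ** B) = matrix_inv B ** (matrix_inv A ** A) ** B"
    by (simp add: matrix_mul_assoc)
  then show "matrix_inv B ** matrix_inv A ** (A ** B) = mat 1"
    using assms by (simp add: matrix_inv_left)
qed

lemma rational_on_const: "rational_on U (\<lambda>x. c)"
  unfolding rational_on_def by (intro exI[of _ "[:c:]"] exI[of _ 1]) auto

lemma rational_on_add: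
  assumes "rational_on U f" "rational_on U g"
  shows "rational_on U (\<lambda>x. f x + g x)"
proof -
  obtain p1 q1 where 1: "\<forall>x\<in>U. poly q1 x \<noteq> 0 \<and> f x = poly p1 x / poly q1 x"
    using assms(1) unfolding rational_on_def by blast
  obtain p2 q2 where 2: "\<forall>x\<in>U. poly q2 x \<noteq> 0 \<and> g x = poly p2 x / poly q2 x"
    using assms(2) unfolding rational_on_def by blast
  show ?thesis unfolding rational_on_def
    by (intro exI[of _ "p1 * q2 + p2 * q1"] exI[of _ "q1 * q2"]) (use 1 2 in \<open>auto simp: field_simps\<close>)
qed

lemma rational_on_mult:
  assumes "rational_on U f" "rational_on U g"
  shows "rational_on U (\<lambda>x. f x * g x)"
proof -
  obtain p1 q1 where 1: "\<forall>x\<in>U. poly q1 x \<noteq> 0 \<and> f x = poly p1 x / poly q1 x"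
    using assms(1) unfolding rational_on_def by blast
  obtain p2 q2 where 2: "\<forall>x\<in>U. poly q2 x \<noteq> 0 \<and> g x = poly p2 x / poly q2 x"
    using assms(2) unfolding rational_on_def by blast
  show ?thesis unfolding rational_on_def
    by (intro exI[of _ "p1 * p2"] exI[of _ "q1 * q2"]) (use 1 2 in \<open>auto simp: field_simps\<close>)
qed

lemma rational_on_sum:
  assumes "finite A" "\<And>a. a \<in> A \<Longrightarrow> rational_on U (f a)"
  shows "rational_on U (\<lambda>x. \<Sum>a\<in>A. f a x)"
  using assms by (induction A rule: finite_induct) (auto intro: rational_on_const rational_on_add)

lemma rational_on_common_denominator:
  assumes "finite T" "\<And>t. t \<in> T \<Longrightarrow> rational_on U (f t)"
  shows "\<exists>q P. (\<forall>x\<in>U. poly q x \<noteq> 0) \<and> (\<forall>t\<in>T. \<forall>x\<in>U. f t x = poly (P t) x / poly q x)"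
  using assms
proof (induction T rule: finite_induct)
  case empty
  then show ?case by (intro exI[of _ 1]) auto
next
  case (insert t0 T)
  then obtain q P where qP: "\<forall>x\<in>U. poly q x \<noteq> 0" "\<forall>t\<in>T. \<forall>x\<in>U. f t x = poly (P t) x / poly q x"
    by auto
  obtain p0 q0 where 0: "\<forall>x\<in>U. poly q0 x \<noteq> 0 \<and> f t0 x = poly p0 x / poly q0 x"
    using insert.prems unfolding rational_on_def by blast
  show ?case
    by (intro exI[of _ "q * q0"] exI[of _ "\<lambda>t. if t = t0 then p0 * q else P t * q0"])
       (use qP 0 in \<open>auto simp: field_simps\<close>)
qed

lemma rational_mat_on_const: "rational_mat_on U (\<lambda>x. C)"
  unfolding rational_mat_on_def by (simp add: rational_on_const)

lemma rational_mat_on_mult: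
  assumes "rational_mat_on U A" "rational_mat_on U B"
  shows "rational_mat_on U (\<lambda>x. A x ** B x)"
  using assms unfolding rational_mat_on_def matrix_matrix_mult_def
  by (auto intro!: rational_on_sum rational_on_mult)

lemma rational_mat_on_cong:
  assumes "rational_mat_on U F" "\<And>x. x \<in> U \<Longrightarrow> F x = G x"
  shows "rational_mat_on U G"
  using assms unfolding rational_mat_on_def rational_on_def by metis

lemma rational_mat_on_common_denominator:
  fixes F :: "'k \<Rightarrow> complex \<Rightarrow> complex^'n^'n"
  assumes "finite K" "\<And>k. k \<in> K \<Longrightarrow> rational_mat_on U (F k)"
  shows "\<exists>q P. (\<forall>x\<in>U. poly q x \<noteq> 0) \<and>
           (\<forall>k\<in>K. \<forall>x\<in>U. \<forall>i j. F k x $ i $ j = poly (P k i j) x / poly q x)"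
proof -
  have "\<exists>q P. (\<forall>x\<in>U. poly q x \<noteq> 0) \<and> (\<forall>t\<in>K \<times> UNIV. \<forall>x\<in>U.
      F (fst t) x $ fst (snd t) $ snd (snd t) = poly (P t) x / poly q x)"
    using assms unfolding rational_mat_on_def by (intro rational_on_common_denominator) auto
  then obtain q P where "\<forall>x\<in>U. poly q x \<noteq> 0" "\<forall>t\<in>K \<times> UNIV. \<forall>x\<in>U.
      F (fst t) x $ fst (snd t) $ snd (snd t) = poly (P t) x / poly q x"
    by blast
  then show ?thesis by (intro exI[of _ q] exI[of _ "\<lambda>k i j. P (k, i, j)"]) auto
qed

lemma lincomb_eliminate_coordinate:
  fixes d :: "'k \<Rightarrow> complex" and B :: "'k \<Rightarrow> 'i \<Rightarrow> complex"
  assumes "finite K" "k0 \<in> K" "B k0 i0 \<noteq> 0" "(\<Sum>k\<in>K. d k * B k i0) = 0"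
  shows "(\<Sum>k\<in>K. d k * B k i) = (\<Sum>k\<in>K-{k0}. d k * (B k i - B k i0 / B k0 i0 * B k0 i))"
proof -
  have split: "(\<Sum>k\<in>K. f k) = f k0 + (\<Sum>k\<in>K-{k0}. f k)" for f :: "'k \<Rightarrow> complex"
    using assms(1,2) by (simp add: sum.remove)
  have "d k0 = - (\<Sum>k\<in>K-{k0}. d k * B k i0) / B k0 i0"
    using assms(3,4) split[of "\<lambda>k. d k * B k i0"] by (simp add: field_simps add_eq_0_iff)
  moreover have "(\<Sum>k\<in>K-{k0}. d k * (B k i - B k i0 / B k0 i0 * B k0 i)) =
      (\<Sum>k\<in>K-{k0}. d k * B k i) - (\<Sum>k\<in>K-{k0}. d k * B k i0) / B k0 i0 * B k0 i"
    by (simp add: algebra_simps sum_subtractf sum_distrib_left sum_distrib_right sum_divide_distrib)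
  ultimately show ?thesis using split[of "\<lambda>k. d k * B k i"] by simp
qed

lemma lincomb_cross_difference:
  fixes u v :: "'i \<Rightarrow> complex" and B :: "'k \<Rightarrow> 'i \<Rightarrow> complex"
  assumes "finite K" "k0 \<in> K" "B k0 i0 \<noteq> 0"
    and "\<And>i. u i = (\<Sum>k\<in>K. a k * B k i)" "\<And>i. v i = (\<Sum>k\<in>K. b k * B k i)"
  shows "\<exists>c. \<forall>i. v i0 * u i - u i0 * v i =
           (\<Sum>k\<in>K-{k0}. c k * (B k i - B k i0 / B k0 i0 * B k0 i))"
proof -
  define d where "d k = v i0 * a k - u i0 * b k" for k
  have d: "v i0 * u i - u i0 * v i = (\<Sum>k\<in>K. d k * B k i)" for i
    unfolding d_def assms(4)[of i] assms(5)[of i]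
    by (simp add: algebra_simps sum_subtractf sum_distrib_left)
  have "(\<Sum>k\<in>K. d k * B k i0) = 0" using d[of i0] by simp
  then have "\<forall>i. v i0 * u i - u i0 * v i = (\<Sum>k\<in>K-{k0}. d k * (B k i - B k i0 / B k0 i0 * B k0 i))"
    using d lincomb_eliminate_coordinate[of K k0 B i0, OF assms(1-3)] by simp
  then show ?thesis by blast
qed

lemma polynomial_relation_of_low_rank_values:
  fixes p :: "'j \<Rightarrow> 'i \<Rightarrow> complex poly" and B :: "'k \<Rightarrow> 'i \<Rightarrow> complex"
  assumes "finite J" "finite K" "card K < card J" "infinite S"
    and "\<And>j x. j \<in> J \<Longrightarrow> x \<in> S \<Longrightarrow> \<exists>c. \<forall>i. poly (p j i) x = (\<Sum>k\<in>K. c k * B k i)"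
  shows "\<exists>c. (\<exists>j\<in>J. c j \<noteq> 0) \<and> (\<forall>i. (\<Sum>j\<in>J. c j * p j i) = 0)"
  using assms
proof (induction "card K" arbitrary: J K p B rule: less_induct)
  case less
  show ?case
  proof (cases "\<forall>j\<in>J. \<forall>i. p j i = 0")
    case True
    moreover have "J \<noteq> {}" using less.prems(3) by auto
    ultimately show ?thesis by (intro exI[of _ "\<lambda>_. 1"]) auto
  next
    case False
    then obtain j0 i0 where j0: "j0 \<in> J" "p j0 i0 \<noteq> 0" by blast
    have "\<exists>k0\<in>K. B k0 i0 \<noteq> 0"
    proof (rule ccontr)
      assume "\<not> ?thesis"
      then have "S \<subseteq> {x. poly (p j0 i0) x = 0}" using less.prems(5)[OF j0(1)] by fastforce
      then show False using poly_roots_finite[OF j0(2)] less.prems(4) finite_subset by blast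
    qed
    then obtain k0 where k0: "k0 \<in> K" "B k0 i0 \<noteq> 0" by blast
    define B' where "B' k i = B k i - B k i0 / B k0 i0 * B k0 i" for k i
    define w where "w j i = p j0 i0 * p j i - p j i0 * p j0 i" for j i
    have "card K > 0" using less.prems(2) k0(1) card_gt_0_iff by blast
    then have card: "card (K - {k0}) < card K" "card (K - {k0}) < card (J - {j0})"
      using less.prems(1-3) k0(1) j0(1) by (simp_all add: card_Diff_singleton)
    \<comment> \<open>\<open>w j\<close> vanishes in coordinate \<open>i0\<close>, which removes \<open>B k0\<close> from the spanning family.\<close>
    have "\<exists>c. \<forall>i. poly (w j i) x = (\<Sum>k\<in>K-{k0}. c k * B' k i)"
      if j: "j \<in> J - {j0}" and x: "x \<in> S" for j x
    proof -
      obtain a where a: "\<forall>i. poly (p j i) x = (\<Sum>k\<in>K. a k * B k i)" using less.prems(5) j x by blast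
      obtain b where b: "\<forall>i. poly (p j0 i) x = (\<Sum>k\<in>K. b k * B k i)"
        using less.prems(5) j0(1) x by blast
      show ?thesis
        using lincomb_cross_difference[where u="\<lambda>i. poly (p j i) x" and v="\<lambda>i. poly (p j0 i) x",
            OF less.prems(2) k0 a[rule_format] b[rule_format]]
        unfolding w_def B'_def by simp
    qed
    then obtain c where c: "\<exists>j\<in>J-{j0}. c j \<noteq> 0" "\<forall>i. (\<Sum>j\<in>J-{j0}. c j * w j i) = 0"
      using less.hyps[OF card(1) _ _ card(2) less.prems(4)] less.prems(1,2) by blast
    define c' where "c' j = (if j = j0 then - (\<Sum>j\<in>J-{j0}. c j * p j i0) else p j0 i0 * c j)" for j
    have "(\<Sum>j\<in>J. c' j * p j i) = (\<Sum>j\<in>J-{j0}. c j * w j i)" for i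
    proof -
      have "(\<Sum>j\<in>J. c' j * p j i) = c' j0 * p j0 i + (\<Sum>j\<in>J-{j0}. p j0 i0 * c j * p j i)"
        using less.prems(1) j0(1) by (simp add: sum.remove c'_def)
      then show ?thesis unfolding w_def c'_def
        by (simp add: algebra_simps sum_subtractf sum_distrib_left sum_distrib_right)
    qed
    moreover have "\<exists>j\<in>J. c' j \<noteq> 0" using c(1) j0(2) by (auto simp: c'_def)
    ultimately show ?thesis using c(2) by auto
  qed
qed

interpretation mat: vector_space "mscale :: complex \<Rightarrow> complex^'n^'n \<Rightarrow> complex^'n^'n"
  by unfold_locales (simp_all add: mscale_def vec_eq_iff algebra_simps)

lemma mat_in_span_elementary:
  fixes A :: "complex^'n^'n"
  shows "A \<in> mat.span (range (\<lambda>t. \<chi> a b. if (a, b) = t then 1 else 0))"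
proof -
  have entry: "A $ a $ b = (\<Sum>t\<in>UNIV. A $ fst t $ snd t * (if (a, b) = t then 1 else 0))" for a b
  proof -
    have "(\<Sum>t\<in>UNIV. A $ fst t $ snd t * (if (a, b) = t then 1 else 0)) =
        (\<Sum>t\<in>UNIV. if (a, b) = t then A $ fst t $ snd t else 0)"
      by (rule sum.cong) auto
    also have "\<dots> = A $ a $ b" by (subst sum.delta') simp_all
    finally show ?thesis ..
  qed
  have "A = (\<Sum>t\<in>UNIV. mscale (A $ fst t $ snd t) (\<chi> a b. if (a, b) = t then 1 else 0))"
    unfolding vec_eq_iff sum_component mscale_def vec_lambda_beta by (intro allI entry)
  also have "\<dots> \<in> mat.span (range (\<lambda>t. \<chi> a b. if (a, b) = t then 1 else 0))"
    by (intro mat.span_sum mat.span_scale mat.span_base) simp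
  finally show ?thesis .
qed

lemma mat_independent_finite:
  fixes B :: "(complex^'n^'n) set"
  assumes "mat.independent B"
  shows "finite B"
proof -
  have "finite (range (\<lambda>t. (\<chi> a b. if (a, b) = t then 1 else 0) :: complex^'n^'n))"
    by simp
  then show ?thesis using mat.independent_span_bound[OF _ assms] mat_in_span_elementary by blast
qed

lemma trace_sum_mscale_mult:
  fixes X :: "'k \<Rightarrow> complex^'n^'n"
  shows "trace ((\<Sum>k\<in>K. mscale (a k) (X k)) ** M) = (\<Sum>k\<in>K. a k * trace (X k ** M))"
  by (simp add: trace_def matrix_matrix_mult_def sum_component mscale_def sum_distrib_left
      sum_distrib_right mult.assoc sum.swap[of _ K])

lemma rational_mat_polynomial_relation:
  fixes F :: "nat \<Rightarrow> complex \<Rightarrow> complex^'n^'n"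
  assumes U: "infinite U" and dim: "cdim L \<le> d"
    and F_rat: "\<And>k. k \<le> d \<Longrightarrow> rational_mat_on U (F k)"
    and F_L: "\<And>k x. k \<le> d \<Longrightarrow> x \<in> U \<Longrightarrow> F k x \<in> L"
  shows "\<exists>\<alpha>. (\<exists>k\<le>d. \<alpha> k \<noteq> 0) \<and> (\<forall>x\<in>U. (\<Sum>k = 0..d. mscale (poly (\<alpha> k) x) (F k x)) = 0)"
proof -
  obtain Bs where Bs: "mat.independent Bs" "L \<subseteq> mat.span Bs" "card Bs = mat.dim L"
    by (rule mat.basis_exists)
  have "finite Bs" using Bs(1) by (rule mat_independent_finite)
  obtain q P where q: "\<forall>x\<in>U. poly q x \<noteq> 0"
    and P: "\<forall>k\<in>{0..d}. \<forall>x\<in>U. \<forall>i j. F k x $ i $ j = poly (P k i j) x / poly q x"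
    using rational_mat_on_common_denominator[of "{0..d}" U F] F_rat by auto
  have "\<exists>c. \<forall>t. poly (P k (fst t) (snd t)) x = (\<Sum>b\<in>Bs. c b * b $ fst t $ snd t)"
    if k: "k \<in> {0..d}" and x: "x \<in> U" for k x
  proof -
    obtain u where u: "F k x = (\<Sum>b\<in>Bs. mscale (u b) b)"
      using Bs(2) F_L[of k x] k x mat.span_finite[OF \<open>finite Bs\<close>] by auto
    have "poly (P k i j) x = (\<Sum>b\<in>Bs. poly q x * u b * b $ i $ j)" for i j
    proof -
      have "poly (P k i j) x = poly q x * F k x $ i $ j" using P q k x by simp
      then show ?thesis unfolding u by (simp add: sum_component mscale_def sum_distrib_left mult.assoc)
    qed
    then show ?thesis by (intro exI[of _ "\<lambda>b. poly q x * u b"]) simp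
  qed
  moreover have "card Bs < card {0..d}" using Bs(3) dim by (simp add: cdim_def)
  ultimately obtain \<alpha> where \<alpha>: "\<exists>k\<in>{0..d}. \<alpha> k \<noteq> 0"
      "\<forall>t. (\<Sum>k\<in>{0..d}. \<alpha> k * P k (fst t) (snd t)) = 0"
    using polynomial_relation_of_low_rank_values[of "{0..d}" Bs U "\<lambda>k t. P k (fst t) (snd t)"
        "\<lambda>b t. b $ fst t $ snd t"] \<open>finite Bs\<close> U by auto
  have "(\<Sum>k = 0..d. mscale (poly (\<alpha> k) x) (F k x)) = 0" if x: "x \<in> U" for x
  proof -
    have "(\<Sum>k = 0..d. poly (\<alpha> k) x * F k x $ i $ j) = 0" for i j
    proof -
      have "(\<Sum>k = 0..d. poly (\<alpha> k) x * F k x $ i $ j) =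
          poly (\<Sum>k = 0..d. \<alpha> k * P k i j) x / poly q x"
        using P x by (simp add: poly_sum sum_divide_distrib)
      then show ?thesis using \<alpha>(2)[rule_format, of "(i, j)"] by simp
    qed
    then show ?thesis by (simp add: vec_eq_iff sum_component mscale_def)
  qed
  then show ?thesis using \<alpha>(1) by (intro exI[of _ \<alpha>]) auto
qed

lemma bounded_linear_matrix_sandwich:
  fixes g h :: "complex^'n^'n"
  shows "bounded_linear (\<lambda>A. g ** A ** h)"
proof -
  have scaleR: "r *\<^sub>R (z::complex) = of_real r * z" for r z by (simp add: scaleR_conv_of_real)
  have "linear (\<lambda>A. g ** A ** h)"
    by (rule linearI)
       (simp_all add: vec_eq_iff matrix_matrix_mult_def sum_distrib_left sum_distrib_right
          sum.distrib algebra_simps vector_scaleR_component scaleR)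
  then show ?thesis using linear_conv_bounded_linear by blast
qed

lemma lie_algebra_conj:
  fixes G :: "(complex^'n^'n) set"
  assumes G: "matrix_group G" and g: "g \<in> G" and E: "E \<in> lie_algebra G"
  shows "matrix_inv g ** E ** g \<in> lie_algebra G"
proof -
  obtain \<gamma> where \<gamma>: "\<forall>t. \<gamma> t \<in> G" "\<gamma> 0 = mat 1" "(\<gamma> has_vector_derivative E) (at 0)"
    using E unfolding lie_algebra_def by blast
  have "\<forall>t. matrix_inv g ** \<gamma> t ** g \<in> G" using G g \<gamma>(1) unfolding matrix_group_def by blast
  moreover have "matrix_inv g ** \<gamma> 0 ** g = mat 1"
    using G g \<gamma>(2) matrix_inv_left unfolding matrix_group_def by (auto simp: matrix_mul_rid)
  moreover have "((\<lambda>t. matrix_inv g ** \<gamma> t ** g) has_vector_derivative matrix_inv g ** E ** g) (at 0)"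
    by (rule bounded_linear.has_vector_derivative[OF bounded_linear_matrix_sandwich \<gamma>(3)])
  ultimately show ?thesis
    unfolding lie_algebra_def by (intro CollectI exI[of _ "\<lambda>t. matrix_inv g ** \<gamma> t ** g"]) blast
qed

lemma Psi_shift_eq_Rprod:
  assumes "\<And>n. \<Psi> (n + 1) x = R n x ** \<Psi> n x"
  shows "\<Psi> (N + int k) x = Rprod R N k x ** \<Psi> N x"
proof (induction k)
  case (Suc k)
  have "\<Psi> (N + int (Suc k)) x = R (N + int k) x ** \<Psi> (N + int k) x"
    using assms[of "N + int k"] by (simp add: ac_simps)
  then show ?case using Suc by (simp add: matrix_mul_assoc)
qed simp

lemma invertible_Rprod:
  assumes "\<And>n. invertible (R n x)"
  shows "invertible (Rprod R N k x)"
  by (induction k) (simp_all add: assms invertible_mult invertible_def[of "mat 1"] exI[of _ "mat 1"])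

lemma rational_mat_on_Rprod:
  assumes "\<And>n. rational_mat_on U (R n)"
  shows "rational_mat_on U (Rprod R N k)"
proof (induction k)
  case 0
  then show ?case using rational_mat_on_const[of U "mat 1"] by simp
next
  case (Suc k)
  then show ?case using rational_mat_on_mult[OF assms Suc] by simp
qed

lemma rational_mat_on_matrix_inv_Rprod:
  fixes R :: "int \<Rightarrow> complex \<Rightarrow> complex^'n^'n"
  assumes "\<And>n x. x \<in> U \<Longrightarrow> invertible (R n x)"
    and "\<And>n. rational_mat_on U (\<lambda>x. matrix_inv (R n x))"
  shows "rational_mat_on U (\<lambda>x. matrix_inv (Rprod R N k x))"
proof (induction k)
  case 0
  have "matrix_inv (mat 1) = (mat 1 :: complex^'n^'n)" by (rule matrix_inv_unique) simp_all
  then show ?case using rational_mat_on_const[of U "mat 1"] by simp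
next
  case (Suc k)
  show ?case
  proof (rule rational_mat_on_cong[OF rational_mat_on_mult[OF Suc assms(2)[of "N + int k"]]])
    fix x assume "x \<in> U"
    then show "matrix_inv (Rprod R N k x) ** matrix_inv (R (N + int k) x) =
        matrix_inv (Rprod R N (Suc k) x)"
      using assms(1) by (simp add: matrix_inv_mult invertible_Rprod)
  qed
qed

lemma rational_mat_on_Dk:
  assumes "\<And>n. rational_mat_on U (D n)" "\<And>n. rational_mat_on U (R n)"
    and "\<And>n x. x \<in> U \<Longrightarrow> invertible (R n x)"
    and "\<And>n. rational_mat_on U (\<lambda>x. matrix_inv (R n x))"
  shows "rational_mat_on U (Dk R D N k)"
  unfolding Dk_def
  by (intro rational_mat_on_mult rational_mat_on_Rprod rational_mat_on_matrix_inv_Rprod assms)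

lemma Dk_in_lie_algebra:
  assumes G: "matrix_group G" and D: "D (N + int k) x \<in> lie_algebra G"
    and Psi: "\<And>n. \<Psi> n x \<in> G \<and> invertible (\<Psi> n x)"
    and step: "\<And>n. \<Psi> (n + 1) x = R n x ** \<Psi> n x"
  shows "Dk R D N k x \<in> lie_algebra G"
proof -
  have "Rprod R N k x = \<Psi> (N + int k) x ** matrix_inv (\<Psi> N x)"
    using Psi_shift_eq_Rprod[where \<Psi>=\<Psi> and R=R, OF step] Psi[of N] matrix_inv_right
    by (metis matrix_mul_assoc matrix_mul_rid)
  then have "Rprod R N k x \<in> G" using G Psi unfolding matrix_group_def by simp
  then show ?thesis unfolding Dk_def using lie_algebra_conj[OF G _ D] by blast
qed

lemma W1_shift_eq_trace_Dk:
  assumes Psi: "invertible (\<Psi> N x)" and R: "\<And>n. invertible (R n x)"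
    and step: "\<And>n. \<Psi> (n + 1) x = R n x ** \<Psi> n x"
  shows "W1 D \<Psi> (N + int k) x E = trace (Dk R D N k x ** Mfun \<Psi> N x E)"
proof -
  let ?P = "Rprod R N k x"
  have P: "invertible ?P" using R by (rule invertible_Rprod)
  have "Mfun \<Psi> (N + int k) x E = ?P ** Mfun \<Psi> N x E ** matrix_inv ?P"
    unfolding Mfun_def Psi_shift_eq_Rprod[where \<Psi>=\<Psi> and R=R, OF step] matrix_inv_mult[OF P Psi]
    by (simp add: matrix_mul_assoc)
  then have "W1 D \<Psi> (N + int k) x E = trace (D (N + int k) x ** ?P ** (Mfun \<Psi> N x E ** matrix_inv ?P))"
    unfolding W1_def by (simp add: matrix_mul_assoc)
  also have "\<dots> = trace (matrix_inv ?P ** (D (N + int k) x ** ?P ** Mfun \<Psi> N x E))"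
    by (metis trace_mul_sym matrix_mul_assoc)
  finally show ?thesis unfolding Dk_def by (simp add: matrix_mul_assoc)
qed

theorem mainTheorem8:
  fixes G :: "(complex^'n^'n) set"
    and D \<Psi> R :: "int \<Rightarrow> complex \<Rightarrow> complex^'n^'n"
    and U :: "complex set" and N :: int
  assumes G: "complex_reductive_matrix_group G"
    and U: "open U" "connected U" "simply_connected U" "U \<noteq> {}"
    and D_rat: "\<forall>n. rational_mat_on U (D n)"
    and D_g: "\<forall>n. \<forall>x\<in>U. D n x \<in> lie_algebra G"
    and Psi_G: "\<forall>n. \<forall>x\<in>U. \<Psi> n x \<in> G \<and> invertible (\<Psi> n x)"
    and Psi_ode: "\<forall>n. \<forall>x\<in>U. \<forall>i j.
        ((\<lambda>y. \<Psi> n y $ i $ j) has_field_derivative (D n x ** \<Psi> n x) $ i $ j) (at x)"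
    and R_rat: "\<forall>n. rational_mat_on U (R n) \<and> (\<forall>x\<in>U. invertible (R n x)) \<and>
        rational_mat_on U (\<lambda>x. matrix_inv (R n x))"
    and Psi_step: "\<forall>n. \<forall>x\<in>U. \<Psi> (n + 1) x = R n x ** \<Psi> n x"
  shows "\<exists>\<alpha> :: nat \<Rightarrow> complex poly.
     (\<exists>k \<le> cdim (lie_algebra G). \<alpha> k \<noteq> 0) \<and>
     (\<forall>x\<in>U. (\<Sum>k = 0..cdim (lie_algebra G). mscale (poly (\<alpha> k) x) (Dk R D N k x)) = 0) \<and>
     (\<forall>E\<in>lie_algebra G. \<forall>x\<in>U.
        (\<Sum>k = 0..cdim (lie_algebra G). poly (\<alpha> k) x * W1 D \<Psi> (N + int k) x E) = 0)"
proof -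
  let ?d = "cdim (lie_algebra G)"
  have G_group: "matrix_group G"
    using G unfolding complex_reductive_matrix_group_def closed_matrix_group_def by blast
  have "infinite U" using U(1,4) finite_imp_not_open by blast
  moreover have "rational_mat_on U (Dk R D N k)" for k
    using D_rat R_rat by (intro rational_mat_on_Dk) auto
  moreover have "Dk R D N k x \<in> lie_algebra G" if "x \<in> U" for k x
    using Dk_in_lie_algebra[OF G_group] D_g Psi_G Psi_step that by blast
  ultimately obtain \<alpha> where \<alpha>: "\<exists>k\<le>?d. \<alpha> k \<noteq> 0"
      "\<forall>x\<in>U. (\<Sum>k = 0..?d. mscale (poly (\<alpha> k) x) (Dk R D N k x)) = 0"
    using rational_mat_polynomial_relation[of U "lie_algebra G" ?d "Dk R D N"] by blast
  have "(\<Sum>k = 0..?d. poly (\<alpha> k) x * W1 D \<Psi> (N + int k) x E) = 0" if x: "x \<in> U" for x E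
  proof -
    have "W1 D \<Psi> (N + int k) x E = trace (Dk R D N k x ** Mfun \<Psi> N x E)" for k
      using Psi_G R_rat Psi_step x by (intro W1_shift_eq_trace_Dk) auto
    then have "(\<Sum>k = 0..?d. poly (\<alpha> k) x * W1 D \<Psi> (N + int k) x E) =
        trace ((\<Sum>k = 0..?d. mscale (poly (\<alpha> k) x) (Dk R D N k x)) ** Mfun \<Psi> N x E)"
      by (simp add: trace_sum_mscale_mult)
    then show ?thesis using \<alpha>(2) x by (simp add: trace_def matrix_matrix_mult_def)
  qed
  then show ?thesis using \<alpha> by blast
qed

end
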